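(* The sequence $\{H_n\}_{n\ge1}$ satisfies the Large Deviation Principle on $[0,1]$ with a good rate function. More precisely, for every continuous bounded $g:[0,1]\to\mathbb R$ the limit $\Gamma_g=\lim_{n\to\infty}\frac1n\log\mathbb{E}\big(e^{n g(H_n/n)}\big)$ exists, and with $$R(x)=\sup_{g\in\mathcal C_b([0,1])}\{g(x)-\Gamma_g\},\qquad x\in[0,1],$$ $R$ is a good rate function and: for every closed $F\subseteq[0,1]$, $\limsup_{n\to\infty}\frac1n\log\mathbb P(H_n/n\in F)\le-\inf_{x\in F}R(x)$; for every open $G\subseteq[0,1]$ (in the relative topology), $\liminf_{n\to\infty}\frac1n\log\mathbb P(H_n/n\in G)\ge-\inf_{x\in G}R(x)$.
   Context: Standing setup (discrete-time Hawkes process, DTHP). Let $(a_i)_{i=0}^\infty$ be a sequence of strictly positive real numbers with $\sum_{i=0}^\infty a_i<1$ and $\sum_{i=1}^\infty i\,a_i<\infty$. The arrival process $\{\xi_n\}_{n\ge1}$ is a sequence of $\{0,1\}$-valued random variables on a probability space $(\Omega,\mathcal F,\mathbb P)$ with $\mathbb{P}(\xi_1=1)=a_0$, $\mathbb P(\xi_1=0)=1-a_0$, and for $n\ge2$, $$\mathbb{P}(\xi_n=1\mid \xi_1,\dots,\xi_{n-1})=a_0+\sum_{i=1}^{n-1}a_{n-i}\xi_i,\qquad \mathbb{P}(\xi_n=0\mid \xi_1,\dots,\xi_{n-1})=1-\Big(a_0+\sum_{i=1}^{n-1}a_{n-i}\xi_i\Big).$$ The DTHP is $H_n=\sum_{i=1}^n\xi_i$,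 and $\mathcal F_n=\sigma(\xi_1,\dots,\xi_n)$. A rate function is a lower semicontinuous $I:[0,1]\to[0,\infty]$; it is good if its sublevel sets are compact. $\mathcal C_b([0,1])$ denotes the bounded continuous real functions on $[0,1]$. *)

theory Defs
  imports "HOL-Probability.Probability"
begin

definition elog :: "real \<Rightarrow> ereal" where
  "elog p = (if p \<le> 0 then -\<infinity> else ereal (ln p))"

definition rate_function :: "(real \<Rightarrow> ereal) \<Rightarrow> bool" where
  "rate_function I \<longleftrightarrow> (\<forall>x\<in>{0..1}. I x \<ge> 0) \<and>
     (\<forall>c::real. closedin (top_of_set {0..1}) {x\<in>{0..1}. I x \<le> ereal c})"

definition good_rate_function :: "(real \<Rightarrow> ereal) \<Rightarrow> bool" where
  "good_rate_function I \<longleftrightarrow> rate_function I \<and>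
     (\<forall>c::real. compact {x\<in>{0..1}. I x \<le> ereal c})"

end

theory Submission
  imports Defs
begin

text \<open>Let p n x be the probability that the first n arrivals follow the binary path x.
  Appending a path z of length m to a path y of length k changes the conditional arrival
  probabilities along z only through the excitation left by y, which at time k + t is at most the
  tail mass of a beyond t.  Summed over t these tails are bounded by the first moment of a, so
  p (k + m) (y z) \<ge> exp (- kappa) p k y p m z with kappa = (\<Sum>i. i a i) / (1 - \<Sum>i. a i).  Consequently P(H n / n \<in> (alpha, beta)) is
  supermultiplicative up to exp (- kappa); as it is also at least c ^ n, a Fekete argument gives
  the local rates lim (1/n) ln P(H n / n \<in> (alpha, beta)).  Covering [0, 1] by finitely many short
  intervals on which a continuous g is almost constant turns the local rates into the existence
  of Gamma g.  The bounds for R x = sup (g x - Gamma g) then follow as in Bryc's inverse Varadhan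
  lemma: an exponential Chebyshev bound with a g nearly attaining R x controls small balls,
  compactness gives the upper bound on closed sets, and a deep tent function at x gives the lower
  bound on open sets.\<close>

lemma mediant_in_open_interval:
  fixes p q k m \<alpha> \<beta> :: real
  assumes "0 < k" "0 < m" and "p / k \<in> {\<alpha><..<\<beta>}" "q / m \<in> {\<alpha><..<\<beta>}"
  shows "(p + q) / (k + m) \<in> {\<alpha><..<\<beta>}"
proof -
  have "\<alpha> * k < p" "\<alpha> * m < q" "p < \<beta> * k" "q < \<beta> * m"
    using assms by (auto simp: field_simps)
  then have "\<alpha> * (k + m) < p + q" "p + q < \<beta> * (k + m)"
    by (simp_all add: algebra_simps)
  then show ?thesis using assms by (simp add: field_simps)
qed

lemma grid_point_near:
  fixes x d :: real
  assumes "0 \<le> x" "x \<le> 1" "0 < n" "1 / real n < d"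
  shows "\<exists>j\<le>n. \<bar>x - real j / real n\<bar> < d"
proof -
  define j where "j = nat \<lfloor>x * real n\<rfloor>"
  have "x * real n \<le> real n" using assms by (simp add: mult_left_le_one_le)
  then have "j \<le> n" unfolding j_def by (simp add: nat_le_iff floor_le_iff)
  moreover have "real j \<le> x * real n" "x * real n < real j + 1"
    unfolding j_def using assms by (simp_all add: of_nat_nat)
  then have "real j / real n \<le> x" "x < real j / real n + 1 / real n"
    using assms(3) by (simp_all add: field_simps)
  ultimately show ?thesis using assms(4) by (intro exI[of _ j]) auto
qed

lemma ln_add_div_le_max:
  fixes p q t :: real
  assumes "0 < p" "0 < q" "0 < t"
  shows "ln (p + q) / t \<le> ln 2 / t + max (ln p / t) (ln q / t)"
proof -
  have "ln (p + q) \<le> ln (2 * max p q)" using assms by simp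
  also have "\<dots> = ln 2 + max (ln p) (ln q)" using assms by (simp add: ln_mult max_def)
  finally have "ln (p + q) / t \<le> (ln 2 + max (ln p) (ln q)) / t"
    by (rule divide_right_mono) (use assms in simp)
  then show ?thesis using assms by (simp add: add_divide_distrib max_divide_distrib_right)
qed

lemma exp_penalty_le_one_minus:
  fixes d r S T :: real
  assumes "0 \<le> d" "d \<le> T" "d + r \<le> S" "S < 1"
  shows "exp (- T / (1 - S)) * (1 - r) \<le> 1 - (d + r)"
proof -
  have "(1 - S) * (T / (1 - S)) \<le> (1 - (d + r)) * (T / (1 - S))"
    using assms by (intro mult_right_mono) auto
  then have "d \<le> (1 - (d + r)) * (T / (1 - S))" using assms by simp
  then have "1 - r \<le> (1 - (d + r)) * (1 + T / (1 - S))" by (simp add: algebra_simps)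
  also have "\<dots> \<le> (1 - (d + r)) * exp (T / (1 - S))"
    using assms exp_ge_add_one_self[of "T / (1 - S)"] by (intro mult_left_mono) (auto simp: add.commute)
  finally have "exp (- T / (1 - S)) * (1 - r)
      \<le> exp (- T / (1 - S)) * ((1 - (d + r)) * exp (T / (1 - S)))"
    by (rule mult_left_mono) simp
  also have "\<dots> = (1 - (d + r)) * (exp (T / (1 - S)) * exp (- (T / (1 - S))))"
    by (simp add: algebra_simps)
  finally show ?thesis by (simp add: exp_minus_inverse)
qed

lemma convergent_if_eventually_near:
  fixes s :: "nat \<Rightarrow> real"
  assumes near: "\<And>e. 0 < e \<Longrightarrow> \<exists>V. \<forall>\<^sub>F n in sequentially. \<bar>s n - V\<bar> \<le> e"
  shows "convergent s"
proof (rule Cauchy_convergent, rule CauchyI)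
  fix e :: real assume "0 < e"
  then obtain V where "\<forall>\<^sub>F n in sequentially. \<bar>s n - V\<bar> \<le> e / 3"
    using near[of "e / 3"] by auto
  then obtain K where K: "\<And>n. K \<le> n \<Longrightarrow> \<bar>s n - V\<bar> \<le> e / 3"
    unfolding eventually_sequentially by blast
  show "\<exists>K. \<forall>m\<ge>K. \<forall>n\<ge>K. norm (s m - s n) < e"
  proof (intro exI allI impI)
    fix m n assume "K \<le> m" "K \<le> n"
    then have "\<bar>s m - V\<bar> \<le> e / 3" "\<bar>s n - V\<bar> \<le> e / 3" using K by auto
    then show "norm (s m - s n) < e" using \<open>0 < e\<close> unfolding real_norm_def by linarith
  qed
qed

lemma superadditive_iterate:
  fixes s :: "nat \<Rightarrow> real"
  assumes super: "\<And>k m. N0 \<le> k \<Longrightarrow> N0 \<le> m \<Longrightarrow> s k + s m \<le> s (k + m)"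
    and "N0 \<le> m" "N0 \<le> r"
  shows "real q * s m + s r \<le> s (q * m + r)"
proof (induction q)
  case (Suc q)
  have "s m + s (q * m + r) \<le> s (m + (q * m + r))" by (rule super) (use assms in auto)
  then show ?case using Suc by (simp add: algebra_simps)
qed simp

text \<open>Fekete's decomposition n = q m + r with m \<le> r < 2 m.\<close>
lemma superadditive_lower_estimate:
  fixes s :: "nat \<Rightarrow> real"
  assumes super: "\<And>k m. N0 \<le> k \<Longrightarrow> N0 \<le> m \<Longrightarrow> s k + s m \<le> s (k + m)"
    and nonpos: "\<And>n. N0 \<le> n \<Longrightarrow> s n \<le> 0"
    and lower: "\<And>n. N0 \<le> n \<Longrightarrow> - B * real n \<le> s n" and "0 \<le> B"
    and "1 \<le> N0" "N0 \<le> m" "m \<le> n"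
  shows "s m / real m - 2 * B * real m / real n \<le> s n / real n"
proof -
  define q where "q = n div m - 1"
  define r where "r = m + n mod m"
  have m0: "0 < m" using assms by simp
  have "1 \<le> n div m" using div_le_mono[OF \<open>m \<le> n\<close>, of m] m0 by simp
  then have "q * m + m = n div m * m" by (simp add: q_def diff_mult_distrib)
  then have n_eq: "n = q * m + r" unfolding r_def by (metis add.assoc div_mult_mod_eq)
  have r: "N0 \<le> r" "r < 2 * m" using assms m0 by (auto simp: r_def)
  have "real q * s m + s r \<le> s n"
    using superadditive_iterate[OF super \<open>N0 \<le> m\<close> r(1), of q] n_eq by simp
  moreover have "B * real r \<le> B * (2 * real m)"
    using r(2) \<open>0 \<le> B\<close> by (intro mult_left_mono) auto
  then have "- 2 * B * real m \<le> s r" using lower[OF r(1)] by linarith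
  ultimately have "real m * (real q * s m) \<le> real m * (s n + 2 * B * real m)"
    by (intro mult_left_mono) auto
  moreover have "real n * s m \<le> real m * (real q * s m)"
  proof -
    have "real q * real m \<le> real n" using n_eq by (simp flip: of_nat_mult)
    then have "real n * s m \<le> (real q * real m) * s m"
      using nonpos[OF \<open>N0 \<le> m\<close>] by (rule mult_right_mono_neg)
    then show ?thesis by (simp add: algebra_simps)
  qed
  ultimately have "real n * s m - 2 * B * real m * real m \<le> real m * s n"
    by (simp add: algebra_simps)
  then have "(real n * s m - 2 * B * real m * real m) / (real m * real n)
      \<le> real m * s n / (real m * real n)"
    by (rule divide_right_mono) simp
  moreover have "(real n * s m - 2 * B * real m * real m) / (real m * real n)
      = s m / real m - 2 * B * real m / real n"
    using m0 \<open>m \<le> n\<close> by (simp add: field_simps)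
  ultimately show ?thesis using m0 by simp
qed

lemma superadditive_div_tendsto_SUP:
  fixes s :: "nat \<Rightarrow> real"
  assumes super: "\<And>k m. N0 \<le> k \<Longrightarrow> N0 \<le> m \<Longrightarrow> s k + s m \<le> s (k + m)"
    and nonpos: "\<And>n. N0 \<le> n \<Longrightarrow> s n \<le> 0"
    and lower: "\<And>n. N0 \<le> n \<Longrightarrow> - B * real n \<le> s n" and "0 \<le> B" and "1 \<le> N0"
  shows "(\<lambda>n. s n / real n) \<longlonglongrightarrow> (SUP n\<in>{N0..}. s n / real n)"
proof (rule order_tendstoI)
  have bdd: "bdd_above ((\<lambda>n. s n / real n) ` {N0..})"
    using nonpos by (intro bdd_aboveI[of _ 0]) (auto simp: divide_nonpos_nonneg)
  fix c assume "c < (SUP n\<in>{N0..}. s n / real n)"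
  then obtain m where m: "N0 \<le> m" "c < s m / real m"
    using less_cSUP_iff[OF _ bdd] by force
  have "(\<lambda>n. 2 * B * real m / real n) \<longlonglongrightarrow> 0" by (rule lim_const_over_n)
  then have "\<forall>\<^sub>F n in sequentially. 2 * B * real m / real n < s m / real m - c"
    using m(2) by (intro order_tendstoD) auto
  then show "\<forall>\<^sub>F n in sequentially. c < s n / real n"
    using eventually_ge_at_top[of m]
    by eventually_elim
      (use superadditive_lower_estimate[OF super nonpos lower \<open>0 \<le> B\<close> \<open>1 \<le> N0\<close> m(1)] in force)
next
  fix c assume "(SUP n\<in>{N0..}. s n / real n) < c"
  moreover have "s n / real n \<le> (SUP n\<in>{N0..}. s n / real n)" if "N0 \<le> n" for n
    using that nonpos by (intro cSUP_upper bdd_aboveI[of _ 0]) (auto simp: divide_nonpos_nonneg)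
  ultimately show "\<forall>\<^sub>F n in sequentially. s n / real n < c"
    using eventually_ge_at_top[of N0] by (elim eventually_mono) force
qed

lemma supermultiplicative_ln_div_convergent:
  fixes b :: "nat \<Rightarrow> real"
  assumes "1 \<le> N0" and C: "0 < C" "C \<le> 1" and c: "0 < c" "c \<le> 1"
    and lower: "\<And>n. N0 \<le> n \<Longrightarrow> c ^ n \<le> b n" and le_1: "\<And>n. N0 \<le> n \<Longrightarrow> b n \<le> 1"
    and super: "\<And>k m. N0 \<le> k \<Longrightarrow> N0 \<le> m \<Longrightarrow> C * b k * b m \<le> b (k + m)"
  shows "convergent (\<lambda>n. ln (b n) / real n)"
proof -
  define s where "s n = ln (b n) + ln C" for n
  have pos: "0 < b n" if "N0 \<le> n" for n
    using less_le_trans[OF zero_less_power[OF c(1)] lower[OF that]] .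
  have "s k + s m \<le> s (k + m)" if "N0 \<le> k" "N0 \<le> m" for k m
  proof -
    have "ln (C * b k * b m) \<le> ln (b (k + m))"
      using super[OF that] pos that C by (subst ln_le_cancel_iff) auto
    then show ?thesis using pos[OF that(1)] pos[OF that(2)] C by (simp add: s_def ln_mult)
  qed
  moreover have "s n \<le> 0" if "N0 \<le> n" for n
    using pos[OF that] le_1[OF that] C by (simp add: s_def add_nonpos_nonpos)
  moreover have "- (- ln c - ln C) * real n \<le> s n" if "N0 \<le> n" for n
  proof -
    have "real n * ln c \<le> ln (b n)" using lower[OF that] c pos[OF that] by (simp flip: ln_realpow)
    moreover have "real n * ln C \<le> ln C"
      using C \<open>1 \<le> N0\<close> that mult_right_mono_neg[of 1 "real n" "ln C"] by simp
    ultimately show ?thesis by (simp add: s_def algebra_simps)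
  qed
  moreover have "0 \<le> - ln c - ln C"
    using ln_le_zero_iff[of c] ln_le_zero_iff[of C] C c by linarith
  ultimately have "(\<lambda>n. s n / real n) \<longlonglongrightarrow> (SUP n\<in>{N0..}. s n / real n)"
    using superadditive_div_tendsto_SUP[of N0 s] \<open>1 \<le> N0\<close> by blast
  then have "(\<lambda>n. s n / real n - ln C / real n) \<longlonglongrightarrow> (SUP n\<in>{N0..}. s n / real n) - 0"
    by (intro tendsto_diff lim_const_over_n)
  moreover have "(\<lambda>n. s n / real n - ln C / real n) = (\<lambda>n. ln (b n) / real n)"
    by (simp add: s_def add_divide_distrib)
  ultimately show ?thesis unfolding convergent_def by auto
qed

lemma uniform_continuity_grid:
  fixes g :: "real \<Rightarrow> real"
  assumes "continuous_on {0..1} g" "0 < e"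
  obtains d N where "0 < d" "0 < N" "1 / real N < d"
    "\<And>x y. x \<in> {0..1} \<Longrightarrow> y \<in> {0..1} \<Longrightarrow> \<bar>y - x\<bar> < d \<Longrightarrow> \<bar>g y - g x\<bar> < e"
proof -
  have "uniformly_continuous_on {0..1} g"
    using assms(1) by (rule compact_uniformly_continuous) simp
  then obtain d where "0 < d"
    and d: "\<And>x y. x \<in> {0..1} \<Longrightarrow> y \<in> {0..1} \<Longrightarrow> dist y x < d \<Longrightarrow> dist (g y) (g x) < e"
    using assms(2) unfolding uniformly_continuous_on_def by metis
  obtain N :: nat where N: "1 / d < real N" using reals_Archimedean2 by blast
  then have "0 < N" using \<open>0 < d\<close> by (cases N) (auto simp: field_simps)
  moreover have "1 / real N < d" using N \<open>0 < d\<close> \<open>0 < N\<close> by (simp add: field_simps)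
  ultimately show ?thesis using that \<open>0 < d\<close> d by (auto simp: dist_real_def)
qed

definition tent :: "real \<Rightarrow> real \<Rightarrow> real \<Rightarrow> real \<Rightarrow> real" where
  "tent m x \<rho> y = - m * min (\<bar>y - x\<bar> / \<rho>) 1"

lemma continuous_on_tent: "0 < \<rho> \<Longrightarrow> continuous_on S (tent m x \<rho>)"
  unfolding tent_def by (intro continuous_intros) auto

lemma tent_nonpos: "0 < \<rho> \<Longrightarrow> 0 \<le> m \<Longrightarrow> tent m x \<rho> y \<le> 0"
  unfolding tent_def by (simp add: mult_nonneg_nonneg)

lemma scaled_elog:
  "0 < n \<Longrightarrow> ereal (1 / real n) * elog p = (if p \<le> 0 then -\<infinity> else ereal (ln p / real n))"
  by (simp add: elog_def)

lemma ln_div_le_of_le_exp: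
  assumes "0 < p" "p \<le> C * exp (- (real n * \<mu>))" "0 < C" "0 < n"
  shows "ln p / real n \<le> ln C / real n - \<mu>"
proof -
  have "ln p \<le> ln (C * exp (- (real n * \<mu>)))" using assms by (subst ln_le_cancel_iff) auto
  also have "\<dots> = ln C - real n * \<mu>" using \<open>0 < C\<close> by (simp add: ln_mult)
  finally have "ln p / real n \<le> (ln C - real n * \<mu>) / real n" by (rule divide_right_mono) simp
  then show ?thesis using \<open>0 < n\<close> by (simp add: diff_divide_distrib)
qed

lemma limsup_scaled_elog_le:
  assumes "0 < C" and bound: "\<forall>\<^sub>F n in sequentially. p n \<le> C * exp (- (real n * \<mu>))"
  shows "limsup (\<lambda>n. ereal (1 / real n) * elog (p n)) \<le> - ereal \<mu>"
  unfolding Limsup_le_iff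
proof (intro allI impI)
  fix y :: ereal assume "- ereal \<mu> < y"
  have finite: "\<forall>\<^sub>F n in sequentially. ereal (1 / real n) * elog (p n) < \<infinity>"
    using eventually_gt_at_top[of 0] by (rule eventually_mono) (simp add: scaled_elog)
  show "\<forall>\<^sub>F n in sequentially. ereal (1 / real n) * elog (p n) < y"
  proof (cases y)
    case (real r)
    then have "0 < r + \<mu>" using \<open>- ereal \<mu> < y\<close> by simp
    with lim_const_over_n have "\<forall>\<^sub>F n in sequentially. ln C / real n < r + \<mu>"
      by (rule order_tendstoD)
    with bound eventually_gt_at_top[of 0]
    have "\<forall>\<^sub>F n in sequentially. p n \<le> C * exp (- (real n * \<mu>)) \<and> 0 < n \<and> ln C / real n < r + \<mu>"
      by (intro eventually_conj)
    then show ?thesis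
    proof (rule eventually_mono, elim conjE)
      fix n :: nat assume n: "p n \<le> C * exp (- (real n * \<mu>))" "0 < n" "ln C / real n < r + \<mu>"
      show "ereal (1 / real n) * elog (p n) < y"
      proof (cases "p n \<le> 0")
        case False
        then have "ln (p n) / real n \<le> ln C / real n - \<mu>"
          using n \<open>0 < C\<close> by (intro ln_div_le_of_le_exp) auto
        then have "ln (p n) / real n < r" using n(3) by linarith
        then show ?thesis using False n(2) real by (simp add: scaled_elog)
      qed (use n real in \<open>simp add: scaled_elog\<close>)
    qed
  next
    case PInf
    then show ?thesis using finite by simp
  next
    case MInf
    then show ?thesis using \<open>- ereal \<mu> < y\<close> by simp
  qed
qed

lemma liminf_scaled_elog_ge:
  assumes "\<And>y. y < c \<Longrightarrow> \<forall>\<^sub>F n in sequentially. 0 < p n \<and> y < ln (p n) / real n"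
  shows "ereal c \<le> liminf (\<lambda>n. ereal (1 / real n) * elog (p n))"
  unfolding le_Liminf_iff
proof (intro allI impI)
  fix y :: ereal assume "y < ereal c"
  then obtain r where "y < ereal r" "ereal r < ereal c" using ereal_dense2 by blast
  then have "\<forall>\<^sub>F n in sequentially. 0 < p n \<and> r < ln (p n) / real n" by (intro assms) simp
  then show "\<forall>\<^sub>F n in sequentially. y < ereal (1 / real n) * elog (p n)"
    using eventually_gt_at_top[of 0]
  proof eventually_elim
    case (elim n)
    then have r_less: "ereal r < ereal (1 / real n) * elog (p n)" by (simp add: scaled_elog)
    show ?case using \<open>y < ereal r\<close> r_less by (rule less_trans)
  qed
qed

lemma le_uminus_if_forall_real_less:
  fixes L I :: ereal
  assumes "\<And>\<mu>. ereal \<mu> < I \<Longrightarrow> L \<le> - ereal \<mu>"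
  shows "L \<le> - I"
proof (rule ccontr)
  assume "\<not> L \<le> - I"
  then have "- I < L" by simp
  then obtain r where r: "- I < ereal r" "ereal r < L" using ereal_dense2 by blast
  then have "ereal (- r) < I" using ereal_uminus_less_reorder[of I "ereal r"] by simp
  then have "L \<le> ereal r" using assms[of "- r"] by simp
  then show False using r(2) by simp
qed

section \<open>Binary paths\<close>

text \<open>Paths are 0/1 sequences indexed from 1 and padded with zeros, so that paths n is finite
  and a sample path is determined by its first n entries.\<close>
definition paths :: "nat \<Rightarrow> (nat \<Rightarrow> nat) set" where
  "paths n = {x. (\<forall>i. x i \<in> {0, 1}) \<and> (\<forall>i. x i \<noteq> 0 \<longrightarrow> i \<in> {1..n})}"

definition arrivals :: "nat \<Rightarrow> (nat \<Rightarrow> nat) \<Rightarrow> nat" where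
  "arrivals n x = (\<Sum>i=1..n. x i)"

definition empirical_rate :: "nat \<Rightarrow> (nat \<Rightarrow> nat) \<Rightarrow> real" where
  "empirical_rate n x = real (arrivals n x) / real n"

definition path_append :: "nat \<Rightarrow> (nat \<Rightarrow> nat) \<Rightarrow> (nat \<Rightarrow> nat) \<Rightarrow> nat \<Rightarrow> nat" where
  "path_append k y z = (\<lambda>i. if i \<le> k then y i else z (i - k))"

lemma paths_binary: "x \<in> paths n \<Longrightarrow> x i \<in> {0, 1}"
  by (simp add: paths_def)

lemma paths_support: "x \<in> paths n \<Longrightarrow> x i \<noteq> 0 \<Longrightarrow> i \<in> {1..n}"
  by (simp add: paths_def)

lemma paths_outside: "x \<in> paths n \<Longrightarrow> i \<notin> {1..n} \<Longrightarrow> x i = 0"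
  using paths_support by blast

lemma zero_in_paths: "(\<lambda>_. 0) \<in> paths n"
  by (simp add: paths_def)

lemma finite_paths: "finite (paths n)"
proof (rule inj_on_finite[of "\<lambda>x. {i. x i = 1}" _ "Pow {1..n}"])
  show "inj_on (\<lambda>x. {i. x i = 1}) (paths n)"
  proof (rule inj_onI, rule ext)
    fix x y i assume x: "x \<in> paths n" and y: "y \<in> paths n" and "{i. x i = 1} = {i. y i = 1}"
    then have "x i = 1 \<longleftrightarrow> y i = 1" by blast
    then show "x i = y i" using paths_binary[OF x, of i] paths_binary[OF y, of i] by auto
  qed
qed (auto simp: paths_def)

lemma paths_Suc:
  "paths (Suc n) = (\<lambda>(x, b). x(Suc n := b)) ` (paths n \<times> {0, 1})"
proof (intro equalityI subsetI)
  fix x assume x: "x \<in> paths (Suc n)"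
  have "x(Suc n := 0) \<in> paths n" using x by (auto simp: paths_def le_Suc_eq)
  moreover have "x = (x(Suc n := 0))(Suc n := x (Suc n))" by simp
  ultimately show "x \<in> (\<lambda>(x, b). x(Suc n := b)) ` (paths n \<times> {0, 1})"
    using paths_binary[OF x, of "Suc n"] by (intro image_eqI[of _ _ "(x(Suc n := 0), x (Suc n))"]) auto
next
  fix y assume "y \<in> (\<lambda>(x, b). x(Suc n := b)) ` (paths n \<times> {0, 1})"
  then obtain x b where x: "x \<in> paths n" and y: "b \<in> {0, 1}" "y = x(Suc n := b)" by auto
  have "y i \<in> {0, 1}" for i using y paths_binary[OF x, of i] by simp
  moreover have "i \<in> {1..Suc n}" if "y i \<noteq> 0" for i
    using that y paths_support[OF x, of i] by (cases "i = Suc n") auto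
  ultimately show "y \<in> paths (Suc n)" by (simp add: paths_def)
qed

lemma inj_on_paths_Suc: "inj_on (\<lambda>(x, b). x(Suc n := b)) (paths n \<times> {0, 1})"
proof (rule inj_onI, clarify)
  fix x b y c
  assume "x \<in> paths n" "y \<in> paths n" and eq: "x(Suc n := b) = y(Suc n := c)"
  then have "x (Suc n) = y (Suc n)" by (simp add: paths_outside)
  then show "x = y \<and> b = c" using eq by (metis fun_upd_same fun_upd_triv fun_upd_upd)
qed

lemma arrivals_le: "x \<in> paths n \<Longrightarrow> arrivals n x \<le> n"
proof -
  assume x: "x \<in> paths n"
  have "arrivals n x \<le> (\<Sum>i=1..n. 1)"
    unfolding arrivals_def
  proof (rule sum_mono)
    fix i show "x i \<le> 1" using paths_binary[OF x, of i] by auto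
  qed
  then show ?thesis by simp
qed

lemma empirical_rate_in_unit: "x \<in> paths n \<Longrightarrow> empirical_rate n x \<in> {0..1}"
  using arrivals_le[of x n] by (cases n) (auto simp: empirical_rate_def)

lemma path_append_in_paths:
  assumes y: "y \<in> paths k" and z: "z \<in> paths m"
  shows "path_append k y z \<in> paths (k + m)"
  unfolding paths_def
proof (intro CollectI conjI allI impI)
  fix i
  show "path_append k y z i \<in> {0, 1}"
    using paths_binary[OF y] paths_binary[OF z] by (simp add: path_append_def)
  assume "path_append k y z i \<noteq> 0"
  then show "i \<in> {1..k + m}"
    using paths_support[OF y, of i] paths_support[OF z, of "i - k"]
    by (cases "i \<le> k") (auto simp: path_append_def)
qed

lemma inj_on_path_append: "inj_on (\<lambda>(y, z). path_append k y z) (paths k \<times> paths m)"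
proof (rule inj_onI, clarify, rule conjI)
  fix y z y' z'
  assume "y \<in> paths k" "z \<in> paths m" "y' \<in> paths k" "z' \<in> paths m"
    and eq: "path_append k y z = path_append k y' z'"
  show "y = y'"
  proof
    fix i show "y i = y' i"
      using fun_cong[OF eq, of i] \<open>y \<in> paths k\<close> \<open>y' \<in> paths k\<close>
      by (cases "i \<le> k") (auto simp: path_append_def paths_outside)
  qed
  show "z = z'"
  proof
    fix i show "z i = z' i"
      using fun_cong[OF eq, of "i + k"] \<open>z \<in> paths m\<close> \<open>z' \<in> paths m\<close>
      by (cases "i = 0") (auto simp: path_append_def paths_outside)
  qed
qed

lemma arrivals_path_append: "arrivals (k + m) (path_append k y z) = arrivals k y + arrivals m z"
proof -
  have "arrivals (k + m) (path_append k y z)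
      = (\<Sum>i=1..k. path_append k y z i) + (\<Sum>i=k+1..k+m. path_append k y z i)"
    unfolding arrivals_def by (rule sum.ub_add_nat) simp
  also have "(\<Sum>i=k+1..k+m. path_append k y z i) = (\<Sum>i=1..m. path_append k y z (i + k))"
    by (metis add.commute sum.shift_bounds_cl_nat_ivl)
  finally show ?thesis by (simp add: arrivals_def path_append_def)
qed

definition initial_ones :: "nat \<Rightarrow> nat \<Rightarrow> nat" where
  "initial_ones j = (\<lambda>i. if 1 \<le> i \<and> i \<le> j then 1 else 0)"

lemma initial_ones_in_paths: "j \<le> n \<Longrightarrow> initial_ones j \<in> paths n"
  by (auto simp: initial_ones_def paths_def)

lemma arrivals_initial_ones: "j \<le> n \<Longrightarrow> arrivals n (initial_ones j) = j"
  unfolding arrivals_def initial_ones_def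
  by (subst sum.mono_neutral_cong_right[of "{1..n}" "{1..j}" _ "\<lambda>_. 1"]) auto

section \<open>Path probabilities of the Hawkes kernel\<close>

locale hawkes_kernel =
  fixes a :: "nat \<Rightarrow> real"
  assumes a_pos: "\<And>i. 0 < a i"
    and summable_a: "summable a" and suminf_a_less_1: "suminf a < 1"
    and summable_moment: "summable (\<lambda>i. real i * a i)"
begin

definition intensity :: "nat \<Rightarrow> (nat \<Rightarrow> nat) \<Rightarrow> real" where
  "intensity n x = a 0 + (\<Sum>i=1..n-1. a (n - i) * real (x i))"

definition step_prob :: "nat \<Rightarrow> (nat \<Rightarrow> nat) \<Rightarrow> real" where
  "step_prob n x = (if x n = 1 then intensity n x else 1 - intensity n x)"

definition path_prob :: "nat \<Rightarrow> (nat \<Rightarrow> nat) \<Rightarrow> real" where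
  "path_prob n x = (\<Prod>j=1..n. step_prob j x)"

definition tail_mass :: "nat \<Rightarrow> real" where
  "tail_mass l = (\<Sum>i. if l \<le> i then a i else 0)"

definition min_step_prob :: real where
  "min_step_prob = min (a 0) (1 - suminf a)"

definition kappa :: real where
  "kappa = (\<Sum>i. real i * a i) / (1 - suminf a)"

lemma a_nonneg: "0 \<le> a i"
  using a_pos[of i] by simp

lemma suminf_a_nonneg: "0 \<le> suminf a"
  by (rule suminf_nonneg[OF summable_a a_nonneg])

lemma min_step_prob_pos: "0 < min_step_prob"
  using a_pos[of 0] suminf_a_less_1 by (simp add: min_step_prob_def)

lemma min_step_prob_le_1: "min_step_prob \<le> 1"
  using suminf_a_nonneg by (simp add: min_step_prob_def)

lemma kappa_nonneg: "0 \<le> kappa"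
  using suminf_nonneg[OF summable_moment] a_nonneg suminf_a_less_1 by (simp add: kappa_def)

lemma summable_tail: "summable (\<lambda>i. if l \<le> i then a i else 0)"
  by (rule summable_comparison_test'[OF summable_a]) (simp add: a_nonneg)

lemma tail_mass_nonneg: "0 \<le> tail_mass l"
  unfolding tail_mass_def by (rule suminf_nonneg[OF summable_tail]) (simp add: a_nonneg)

lemma sum_le_suminf_a: "finite S \<Longrightarrow> sum a S \<le> suminf a"
  by (rule sum_le_suminf[OF summable_a]) (auto simp: a_nonneg)

lemma sum_le_tail_mass: "finite S \<Longrightarrow> S \<subseteq> {l..} \<Longrightarrow> sum a S \<le> tail_mass l"
proof -
  assume S: "finite S" "S \<subseteq> {l..}"
  have "sum a S = (\<Sum>i\<in>S. if l \<le> i then a i else 0)" using S(2) by (intro sum.cong) auto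
  also have "\<dots> \<le> tail_mass l" unfolding tail_mass_def
    by (rule sum_le_suminf[OF summable_tail S(1)]) (simp add: a_nonneg)
  finally show ?thesis .
qed

lemma sum_tail_mass_le: "(\<Sum>t=1..m. tail_mass t) \<le> (\<Sum>i. real i * a i)"
proof -
  have "(\<Sum>t=1..m. tail_mass t) = (\<Sum>i. \<Sum>t=1..m. if t \<le> i then a i else 0)"
    by (simp add: tail_mass_def suminf_sum summable_tail)
  also have "\<dots> \<le> (\<Sum>i. real i * a i)"
  proof (rule suminf_le)
    fix i
    have "(\<Sum>t=1..m. if t \<le> i then a i else 0) = real (min m i) * a i"
      by (subst sum.mono_neutral_cong_right[of "{1..m}" "{1..min m i}" _ "\<lambda>_. a i"]) auto
    also have "\<dots> \<le> real i * a i" using a_nonneg[of i] by (intro mult_right_mono) auto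
    finally show "(\<Sum>t=1..m. if t \<le> i then a i else 0) \<le> real i * a i" .
  qed (auto intro: summable_sum summable_tail summable_moment)
  finally show ?thesis .
qed

lemma intensity_ge: "(\<And>i. x i \<in> {0, 1}) \<Longrightarrow> a 0 \<le> intensity n x"
  unfolding intensity_def by (auto intro!: sum_nonneg simp: a_nonneg)

lemma sum_delayed_le_sum_a:
  assumes "\<And>i. x i \<in> {0, 1}"
  shows "(\<Sum>i\<in>I. a (n - i) * real (x i)) \<le> (\<Sum>i\<in>I. a (n - i))"
proof (rule sum_mono)
  fix i
  have "real (x i) \<le> 1" using assms[of i] by auto
  then show "a (n - i) * real (x i) \<le> a (n - i)" using a_nonneg[of "n - i"] by (simp add: mult_left_le)
qed

lemma sum_a_delays: "I \<subseteq> {..n} \<Longrightarrow> (\<Sum>i\<in>I. a (n - i)) = sum a ((\<lambda>i. n - i) ` I)"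
  by (rule sum.reindex[symmetric, unfolded comp_def])
    (unfold inj_on_def, metis atMost_iff diff_diff_cancel subsetD)

lemma intensity_le: "(\<And>i. x i \<in> {0, 1}) \<Longrightarrow> intensity n x \<le> suminf a"
proof -
  assume x: "\<And>i. x i \<in> {0, 1}"
  have "intensity n x \<le> a 0 + (\<Sum>i=1..n-1. a (n - i))"
    unfolding intensity_def using sum_delayed_le_sum_a[OF x] by simp
  also have "\<dots> = a 0 + sum a ((\<lambda>i. n - i) ` {1..n-1})"
    by (subst sum_a_delays) auto
  also have "\<dots> = sum a (insert 0 ((\<lambda>i. n - i) ` {1..n-1}))"
    by (subst sum.insert) auto
  also have "\<dots> \<le> suminf a" by (rule sum_le_suminf_a) simp
  finally show ?thesis .
qed

lemma step_prob_ge: "(\<And>i. x i \<in> {0, 1}) \<Longrightarrow> min_step_prob \<le> step_prob n x"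
  using intensity_ge[of x n] intensity_le[of x n] by (auto simp: step_prob_def min_step_prob_def)

lemma path_prob_ge: "(\<And>i. x i \<in> {0, 1}) \<Longrightarrow> min_step_prob ^ n \<le> path_prob n x"
  using prod_mono[of "{1..n}" "\<lambda>_. min_step_prob" "\<lambda>j. step_prob j x"]
    step_prob_ge min_step_prob_pos
  by (simp add: path_prob_def less_imp_le)

lemma path_prob_pos: "(\<And>i. x i \<in> {0, 1}) \<Longrightarrow> 0 < path_prob n x"
  using less_le_trans[OF zero_less_power[OF min_step_prob_pos] path_prob_ge] .

lemma path_prob_nonneg:
  assumes "x \<in> paths n" shows "0 \<le> path_prob n x"
  using path_prob_pos[of x n, OF paths_binary[OF assms]] by simp

lemma intensity_cong: "(\<And>i. i < n \<Longrightarrow> x i = y i) \<Longrightarrow> intensity n x = intensity n y"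
  unfolding intensity_def by (intro arg_cong2[of _ _ _ _ "(+)"] sum.cong) auto

lemma step_prob_cong: "(\<And>i. i \<le> n \<Longrightarrow> x i = y i) \<Longrightarrow> step_prob n x = step_prob n y"
  using intensity_cong[of n x y] by (simp add: step_prob_def)

lemma path_prob_cong: "(\<And>i. i \<le> n \<Longrightarrow> x i = y i) \<Longrightarrow> path_prob n x = path_prob n y"
  unfolding path_prob_def by (intro prod.cong step_prob_cong) auto

lemma path_prob_Suc: "path_prob (Suc n) x = path_prob n x * step_prob (Suc n) x"
  by (simp add: path_prob_def prod.nat_ivl_Suc')

lemma sum_path_prob: "(\<Sum>x\<in>paths n. path_prob n x) = 1"
proof (induction n)
  case 0
  have "paths 0 = {\<lambda>_. 0}" by (rule set_eqI) (auto simp: paths_def fun_eq_iff)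
  then show ?case by (simp add: path_prob_def)
next
  case (Suc n)
  have step: "(\<Sum>b\<in>{0, 1}. path_prob (Suc n) (x(Suc n := b))) = path_prob n x" for x
  proof -
    have "path_prob n (x(Suc n := b)) = path_prob n x" for b
      by (rule path_prob_cong) simp
    moreover have "intensity (Suc n) (x(Suc n := b)) = intensity (Suc n) x" for b
      by (rule intensity_cong) simp
    ultimately show ?thesis by (simp add: path_prob_Suc step_prob_def algebra_simps)
  qed
  have "(\<Sum>x\<in>paths (Suc n). path_prob (Suc n) x)
      = (\<Sum>(x, b)\<in>paths n \<times> {0, 1}. path_prob (Suc n) (x(Suc n := b)))"
    unfolding paths_Suc by (subst sum.reindex[OF inj_on_paths_Suc]) (simp add: case_prod_beta comp_def)
  also have "\<dots> = (\<Sum>x\<in>paths n. \<Sum>b\<in>{0, 1}. path_prob (Suc n) (x(Suc n := b)))"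
    by (rule sum.cartesian_product[symmetric])
  also have "\<dots> = (\<Sum>x\<in>paths n. path_prob n x)"
    by (rule sum.cong[OF refl step])
  finally show ?case using Suc.IH by simp
qed

lemma path_prob_path_append_low: "path_prob k (path_append k y z) = path_prob k y"
  by (rule path_prob_cong) (simp add: path_append_def)

lemma intensity_path_append_high:
  assumes "1 \<le> t"
  shows "intensity (k + t) (path_append k y z)
    = (\<Sum>i=1..k. a (k + t - i) * real (y i)) + intensity t z"
proof -
  let ?f = "\<lambda>i. a (k + t - i) * real (path_append k y z i)"
  have "(\<Sum>i=1..k + t - 1. ?f i) = (\<Sum>i=1..k. ?f i) + (\<Sum>i=k+1..k+(t-1). ?f i)"
    using assms sum.ub_add_nat[of 1 k ?f "t - 1"] by simp
  also have "(\<Sum>i=k+1..k+(t-1). ?f i) = (\<Sum>i=1..t-1. ?f (i + k))"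
    using sum.shift_bounds_cl_nat_ivl[of ?f 1 k "t - 1"] by (simp add: add.commute)
  finally show ?thesis by (simp add: intensity_def path_append_def)
qed

text \<open>At time k + t the block y only adds the excitation d \<le> tail_mass t to the intensity; this
  helps an arrival and costs a no-arrival step at most the stated factor.\<close>
lemma step_prob_path_append_high:
  assumes y: "\<And>i. y i \<in> {0, 1}" and z: "\<And>i. z i \<in> {0, 1}" and "1 \<le> t"
  shows "exp (- tail_mass t / (1 - suminf a)) * step_prob t z \<le> step_prob (k + t) (path_append k y z)"
proof -
  define d where "d = (\<Sum>i=1..k. a (k + t - i) * real (y i))"
  have w: "\<And>i. path_append k y z i \<in> {0, 1}" using y z by (simp add: path_append_def)
  have split: "intensity (k + t) (path_append k y z) = d + intensity t z"
    using intensity_path_append_high[OF \<open>1 \<le> t\<close>] by (simp add: d_def)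
  have "0 \<le> d" unfolding d_def by (intro sum_nonneg mult_nonneg_nonneg a_nonneg) simp
  have "d \<le> (\<Sum>i=1..k. a (k + t - i))" unfolding d_def by (rule sum_delayed_le_sum_a[OF y])
  also have "\<dots> = sum a ((\<lambda>i. k + t - i) ` {1..k})" by (rule sum_a_delays) auto
  also have "\<dots> \<le> tail_mass t" by (rule sum_le_tail_mass) auto
  finally have "d \<le> tail_mass t" .
  have "d + intensity t z \<le> suminf a" using intensity_le[of "path_append k y z", OF w, of "k + t"] split by simp
  have last: "path_append k y z (k + t) = z t" using \<open>1 \<le> t\<close> by (simp add: path_append_def)
  show ?thesis
  proof (cases "z t = 1")
    case True
    have "exp (- tail_mass t / (1 - suminf a)) \<le> 1"
      using tail_mass_nonneg[of t] suminf_a_less_1 by simp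
    then have "exp (- tail_mass t / (1 - suminf a)) * intensity t z \<le> intensity t z"
      using intensity_ge[of z, OF z, of t] a_nonneg[of 0] by (intro mult_left_le_one_le) auto
    then show ?thesis using True last split \<open>0 \<le> d\<close> by (simp add: step_prob_def)
  next
    case False
    then show ?thesis
      using exp_penalty_le_one_minus[OF \<open>0 \<le> d\<close> \<open>d \<le> tail_mass t\<close>
          \<open>d + intensity t z \<le> suminf a\<close> suminf_a_less_1] last split
      by (simp add: step_prob_def)
  qed
qed

lemma path_prob_path_append:
  assumes y: "y \<in> paths k" and z: "z \<in> paths m"
  shows "exp (- kappa) * path_prob k y * path_prob m z \<le> path_prob (k + m) (path_append k y z)"
proof -
  let ?w = "path_append k y z"
  let ?c = "\<lambda>t. exp (- tail_mass t / (1 - suminf a))"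
  have "path_prob (k + m) ?w = path_prob k ?w * (\<Prod>j=k+1..k+m. step_prob j ?w)"
    unfolding path_prob_def by (rule prod.ub_add_nat) simp
  also have "(\<Prod>j=k+1..k+m. step_prob j ?w) = (\<Prod>t=1..m. step_prob (k + t) ?w)"
    using prod.shift_bounds_cl_nat_ivl[of "\<lambda>j. step_prob j ?w" 1 k m] by (simp add: add.commute)
  finally have split: "path_prob (k + m) ?w = path_prob k y * (\<Prod>t=1..m. step_prob (k + t) ?w)"
    by (simp add: path_prob_path_append_low)
  have "(\<Prod>t=1..m. ?c t) = exp (- (\<Sum>t=1..m. tail_mass t) / (1 - suminf a))"
    by (simp add: exp_sum[symmetric] sum_negf sum_divide_distrib)
  moreover have "exp (- kappa) \<le> exp (- (\<Sum>t=1..m. tail_mass t) / (1 - suminf a))"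
    using sum_tail_mass_le[of m] suminf_a_less_1 unfolding kappa_def by (simp add: divide_right_mono)
  ultimately have "exp (- kappa) * path_prob m z \<le> (\<Prod>t=1..m. ?c t) * path_prob m z"
    using path_prob_pos[of z, OF paths_binary[OF z], of m] by (intro mult_right_mono) auto
  also have "\<dots> = (\<Prod>t=1..m. ?c t * step_prob t z)"
    by (simp add: prod.distrib path_prob_def)
  also have "\<dots> \<le> (\<Prod>t=1..m. step_prob (k + t) ?w)"
  proof (rule prod_mono)
    fix t assume "t \<in> {1..m}"
    then show "0 \<le> ?c t * step_prob t z \<and> ?c t * step_prob t z \<le> step_prob (k + t) ?w"
      using step_prob_ge[of z, OF paths_binary[OF z], of t] min_step_prob_pos
        step_prob_path_append_high[of y z, OF paths_binary[OF y] paths_binary[OF z], of t k]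
      by auto
  qed
  finally have "path_prob k y * (exp (- kappa) * path_prob m z) \<le> path_prob (k + m) ?w"
    unfolding split using path_prob_pos[of y, OF paths_binary[OF y], of k] by (intro mult_left_mono) auto
  then show ?thesis by (simp add: algebra_simps)
qed

section \<open>Law of the arrival rate\<close>

definition prob_in :: "real set \<Rightarrow> nat \<Rightarrow> real" where
  "prob_in A n = (\<Sum>x\<in>paths n. if empirical_rate n x \<in> A then path_prob n x else 0)"

definition exp_moment :: "(real \<Rightarrow> real) \<Rightarrow> nat \<Rightarrow> real" where
  "exp_moment g n = (\<Sum>x\<in>paths n. exp (real n * g (empirical_rate n x)) * path_prob n x)"

lemma prob_in_nonneg: "0 \<le> prob_in A n"
  unfolding prob_in_def by (intro sum_nonneg) (simp add: path_prob_nonneg)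

lemma prob_in_le_1: "prob_in A n \<le> 1"
proof -
  have "prob_in A n \<le> (\<Sum>x\<in>paths n. path_prob n x)"
    unfolding prob_in_def by (intro sum_mono) (simp add: path_prob_nonneg)
  then show ?thesis by (simp add: sum_path_prob)
qed

lemma prob_in_mono: "A \<inter> {0..1} \<subseteq> B \<Longrightarrow> prob_in A n \<le> prob_in B n"
  unfolding prob_in_def
  by (intro sum_mono) (use empirical_rate_in_unit path_prob_nonneg in fastforce)

lemma prob_in_le_sum:
  assumes "finite I" and cover: "\<And>y. y \<in> {0..1} \<Longrightarrow> y \<in> A \<Longrightarrow> \<exists>i\<in>I. y \<in> B i"
  shows "prob_in A n \<le> (\<Sum>i\<in>I. prob_in (B i) n)"
proof -
  have "prob_in A n \<le> (\<Sum>x\<in>paths n. \<Sum>i\<in>I. if empirical_rate n x \<in> B i then path_prob n x else 0)"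
    unfolding prob_in_def
  proof (rule sum_mono)
    fix x assume x: "x \<in> paths n"
    show "(if empirical_rate n x \<in> A then path_prob n x else 0)
        \<le> (\<Sum>i\<in>I. if empirical_rate n x \<in> B i then path_prob n x else 0)"
    proof (cases "empirical_rate n x \<in> A")
      case True
      then obtain i where i: "i \<in> I" "empirical_rate n x \<in> B i"
        using cover empirical_rate_in_unit[OF x] by blast
      then have "path_prob n x = (if empirical_rate n x \<in> B i then path_prob n x else 0)" by simp
      also have "\<dots> \<le> (\<Sum>i\<in>I. if empirical_rate n x \<in> B i then path_prob n x else 0)"
        by (rule member_le_sum) (use i \<open>finite I\<close> path_prob_nonneg[OF x] in auto)
      finally show ?thesis using True by simp
    qed (auto intro: sum_nonneg simp: path_prob_nonneg[OF x])
  qed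
  also have "\<dots> = (\<Sum>i\<in>I. prob_in (B i) n)"
    by (subst sum.swap) (simp add: prob_in_def)
  finally show ?thesis .
qed

lemma prob_in_ge_min_step_prob_pow:
  assumes "j \<le> n" "real j / real n \<in> A"
  shows "min_step_prob ^ n \<le> prob_in A n"
proof -
  let ?f = "\<lambda>x. if empirical_rate n x \<in> A then path_prob n x else 0"
  have "?f (initial_ones j) \<le> prob_in A n" unfolding prob_in_def
    by (rule member_le_sum) (auto simp: initial_ones_in_paths[OF assms(1)] finite_paths path_prob_nonneg)
  then have "path_prob n (initial_ones j) \<le> prob_in A n"
    using assms by (simp add: empirical_rate_def arrivals_initial_ones)
  moreover have "min_step_prob ^ n \<le> path_prob n (initial_ones j)"
    by (rule path_prob_ge) (simp add: initial_ones_def)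
  ultimately show ?thesis by linarith
qed

lemma prob_in_interval_ge:
  assumes "x \<in> {0..1}" "0 < n" "1 / real n < d"
  shows "min_step_prob ^ n \<le> prob_in {x - d<..<x + d} n"
proof -
  obtain j where "j \<le> n" "\<bar>x - real j / real n\<bar> < d"
    using grid_point_near[of x n d] assms by auto
  then show ?thesis by (intro prob_in_ge_min_step_prob_pow) auto
qed

lemma prob_in_pos_interval:
  assumes "x \<in> {0..1}" "0 < n" "1 / real n < d"
  shows "0 < prob_in {x - d<..<x + d} n"
  using less_le_trans[OF zero_less_power[OF min_step_prob_pos] prob_in_interval_ge[OF assms]] .

lemma prob_in_supermultiplicative:
  assumes "0 < k" "0 < m"
  shows "exp (- kappa) * prob_in {\<alpha><..<\<beta>} k * prob_in {\<alpha><..<\<beta>} m \<le> prob_in {\<alpha><..<\<beta>} (k + m)"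
proof -
  define F where "F n x = (if empirical_rate n x \<in> {\<alpha><..<\<beta>} then path_prob n x else 0)" for n x
  have F_nonneg: "0 \<le> F n x" if "x \<in> paths n" for n x
    using path_prob_nonneg[OF that] by (simp add: F_def)
  have "prob_in {\<alpha><..<\<beta>} k * prob_in {\<alpha><..<\<beta>} m = (\<Sum>(y, z)\<in>paths k \<times> paths m. F k y * F m z)"
    unfolding prob_in_def F_def[symmetric] by (simp add: sum_product sum.cartesian_product)
  then have "exp (- kappa) * prob_in {\<alpha><..<\<beta>} k * prob_in {\<alpha><..<\<beta>} m
      = (\<Sum>(y, z)\<in>paths k \<times> paths m. exp (- kappa) * (F k y * F m z))"
    by (simp add: sum_distrib_left case_prod_beta mult.assoc)
  also have "\<dots> \<le> (\<Sum>(y, z)\<in>paths k \<times> paths m. F (k + m) (path_append k y z))"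
  proof (rule sum_mono, clarify)
    fix y z assume y: "y \<in> paths k" and z: "z \<in> paths m"
    show "exp (- kappa) * (F k y * F m z) \<le> F (k + m) (path_append k y z)"
    proof (cases "empirical_rate k y \<in> {\<alpha><..<\<beta>} \<and> empirical_rate m z \<in> {\<alpha><..<\<beta>}")
      case True
      then have "empirical_rate (k + m) (path_append k y z) \<in> {\<alpha><..<\<beta>}"
        using mediant_in_open_interval[of "real k" "real m" "real (arrivals k y)" \<alpha> \<beta> "real (arrivals m z)"]
          assms by (simp add: empirical_rate_def arrivals_path_append)
      then show ?thesis using True path_prob_path_append[OF y z] by (simp add: F_def mult.assoc)
    next
      case False
      then show ?thesis using F_nonneg[OF path_append_in_paths[OF y z]] by (auto simp: F_def)
    qed
  qed
  also have "\<dots> = (\<Sum>x\<in>(\<lambda>(y, z). path_append k y z) ` (paths k \<times> paths m). F (k + m) x)"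
    by (subst sum.reindex[OF inj_on_path_append]) (simp add: case_prod_beta comp_def)
  also have "\<dots> \<le> (\<Sum>x\<in>paths (k + m). F (k + m) x)"
    by (rule sum_mono2) (auto intro: finite_paths path_append_in_paths F_nonneg)
  finally show ?thesis by (simp add: prob_in_def F_def)
qed

lemma convergent_ln_prob_in_interval:
  assumes "x \<in> {0..1}" "0 < d"
  shows "convergent (\<lambda>n. ln (prob_in {x - d<..<x + d} n) / real n)"
proof -
  obtain N0 :: nat where N0: "1 / d < real N0" using reals_Archimedean2 by blast
  then have "1 \<le> N0" using \<open>0 < d\<close> by (cases N0) (auto simp: field_simps)
  have small: "1 / real n < d" if "N0 \<le> n" for n
  proof -
    have "1 / d < real n" using N0 that by linarith
    then show ?thesis using \<open>0 < d\<close> \<open>1 \<le> N0\<close> that by (simp add: field_simps)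
  qed
  show ?thesis
  proof (rule supermultiplicative_ln_div_convergent[OF \<open>1 \<le> N0\<close>])
    show "0 < exp (- kappa)" "exp (- kappa) \<le> 1" using kappa_nonneg by auto
    show "0 < min_step_prob" "min_step_prob \<le> 1" by (fact min_step_prob_pos min_step_prob_le_1)+
    show "min_step_prob ^ n \<le> prob_in {x - d<..<x + d} n" if "N0 \<le> n" for n
      using prob_in_interval_ge[OF assms(1) _ small[OF that]] that \<open>1 \<le> N0\<close> by simp
    show "prob_in {x - d<..<x + d} n \<le> 1" for n by (rule prob_in_le_1)
    show "exp (- kappa) * prob_in {x - d<..<x + d} k * prob_in {x - d<..<x + d} m
        \<le> prob_in {x - d<..<x + d} (k + m)" if "N0 \<le> k" "N0 \<le> m" for k m
      using prob_in_supermultiplicative that \<open>1 \<le> N0\<close> by simp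
  qed
qed

lemma exp_moment_pos: "0 < exp_moment g n"
proof -
  have "exp (real n * g (empirical_rate n (\<lambda>_. 0))) * path_prob n (\<lambda>_. 0) \<le> exp_moment g n"
    unfolding exp_moment_def
    by (rule member_le_sum) (auto intro!: mult_nonneg_nonneg path_prob_nonneg simp: zero_in_paths finite_paths)
  moreover have "0 < path_prob n (\<lambda>_. 0)" by (rule path_prob_pos) simp
  ultimately show ?thesis using exp_gt_zero mult_pos_pos less_le_trans by blast
qed

lemma exp_moment_zero: "exp_moment (\<lambda>_. 0) n = 1"
  by (simp add: exp_moment_def sum_path_prob)

lemma exp_moment_ge:
  assumes "\<And>y. y \<in> {0..1} \<Longrightarrow> y \<in> A \<Longrightarrow> c \<le> g y"
  shows "exp (real n * c) * prob_in A n \<le> exp_moment g n"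
  unfolding prob_in_def exp_moment_def sum_distrib_left
proof (rule sum_mono)
  fix x assume x: "x \<in> paths n"
  show "exp (real n * c) * (if empirical_rate n x \<in> A then path_prob n x else 0)
      \<le> exp (real n * g (empirical_rate n x)) * path_prob n x"
  proof (cases "empirical_rate n x \<in> A")
    case True
    then have "exp (real n * c) \<le> exp (real n * g (empirical_rate n x))"
      using assms empirical_rate_in_unit[OF x] by (simp add: mult_left_mono)
    then show ?thesis using True path_prob_nonneg[OF x] by (simp add: mult_right_mono)
  qed (simp add: path_prob_nonneg[OF x])
qed

lemma exp_moment_le_sum:
  assumes "finite I" and cover: "\<And>y. y \<in> {0..1} \<Longrightarrow> \<exists>i\<in>I. y \<in> B i \<and> g y \<le> c i"
  shows "exp_moment g n \<le> (\<Sum>i\<in>I. exp (real n * c i) * prob_in (B i) n)"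
proof -
  let ?f = "\<lambda>x i. if empirical_rate n x \<in> B i then exp (real n * c i) * path_prob n x else 0"
  have "exp_moment g n \<le> (\<Sum>x\<in>paths n. \<Sum>i\<in>I. ?f x i)"
    unfolding exp_moment_def
  proof (rule sum_mono)
    fix x assume x: "x \<in> paths n"
    obtain i where i: "i \<in> I" "empirical_rate n x \<in> B i" "g (empirical_rate n x) \<le> c i"
      using cover empirical_rate_in_unit[OF x] by blast
    have "exp (real n * g (empirical_rate n x)) * path_prob n x \<le> ?f x i"
      using i path_prob_nonneg[OF x] by (auto intro!: mult_right_mono mult_left_mono)
    also have "\<dots> \<le> (\<Sum>i\<in>I. ?f x i)"
      by (rule member_le_sum) (use i \<open>finite I\<close> path_prob_nonneg[OF x] in auto)
    finally show "exp (real n * g (empirical_rate n x)) * path_prob n x \<le> (\<Sum>i\<in>I. ?f x i)" .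
  qed
  also have "\<dots> = (\<Sum>i\<in>I. exp (real n * c i) * prob_in (B i) n)"
    by (subst sum.swap) (simp add: prob_in_def sum_distrib_left if_distrib cong: if_cong)
  finally show ?thesis .
qed

lemma ln_exp_moment_ge:
  assumes "0 < n" "0 < prob_in A n" and "\<And>y. y \<in> {0..1} \<Longrightarrow> y \<in> A \<Longrightarrow> c \<le> g y"
  shows "c + ln (prob_in A n) / real n \<le> ln (exp_moment g n) / real n"
proof -
  have "ln (exp (real n * c) * prob_in A n) \<le> ln (exp_moment g n)"
    using exp_moment_ge[OF assms(3)] assms(2) exp_moment_pos by (subst ln_le_cancel_iff) auto
  then have "real n * c + ln (prob_in A n) \<le> ln (exp_moment g n)"
    using assms(2) by (simp add: ln_mult)
  then have "(real n * c + ln (prob_in A n)) / real n \<le> ln (exp_moment g n) / real n"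
    by (rule divide_right_mono) simp
  then show ?thesis using assms(1) by (simp add: add_divide_distrib)
qed

lemma ln_exp_moment_le:
  assumes "0 < n" "finite I"
    and cover: "\<And>y. y \<in> {0..1} \<Longrightarrow> \<exists>i\<in>I. y \<in> B i \<and> g y \<le> c i"
    and pos: "\<And>i. i \<in> I \<Longrightarrow> 0 < prob_in (B i) n"
    and bound: "\<And>i. i \<in> I \<Longrightarrow> c i + ln (prob_in (B i) n) / real n \<le> V"
  shows "ln (exp_moment g n) / real n \<le> V + ln (real (card I)) / real n"
proof -
  have term_le: "exp (real n * c i) * prob_in (B i) n \<le> exp (real n * V)" if "i \<in> I" for i
  proof -
    have "real n * c i + ln (prob_in (B i) n) \<le> real n * V"
      using bound[OF that] assms(1) by (simp add: field_simps)
    moreover have "exp (real n * c i) * prob_in (B i) n = exp (real n * c i + ln (prob_in (B i) n))"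
      using pos[OF that] by (simp add: exp_add)
    ultimately show ?thesis by simp
  qed
  have "exp_moment g n \<le> (\<Sum>i\<in>I. exp (real n * c i) * prob_in (B i) n)"
    by (rule exp_moment_le_sum[OF \<open>finite I\<close>]) (rule cover)
  also have "\<dots> \<le> real (card I) * exp (real n * V)"
    by (rule sum_bounded_above) (rule term_le)
  finally have "exp_moment g n \<le> real (card I) * exp (real n * V)" .
  moreover have "0 < real (card I)"
    using cover[of 0] \<open>finite I\<close> by (auto simp: card_gt_0_iff)
  ultimately have "ln (exp_moment g n) \<le> ln (real (card I) * exp (real n * V))"
    using exp_moment_pos by (subst ln_le_cancel_iff) auto
  then have "ln (exp_moment g n) \<le> ln (real (card I)) + real n * V"
    using \<open>0 < real (card I)\<close> by (simp add: ln_mult)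
  then have "ln (exp_moment g n) / real n \<le> (ln (real (card I)) + real n * V) / real n"
    by (rule divide_right_mono) simp
  then show ?thesis using assms(1) by (simp add: add_divide_distrib)
qed

lemma ln_exp_moment_near_Max:
  assumes "0 < n" "finite I" "I \<noteq> {}"
    and cover: "\<And>y. y \<in> {0..1} \<Longrightarrow> \<exists>i\<in>I. y \<in> B i \<and> g y \<le> c i + e"
    and below: "\<And>i y. i \<in> I \<Longrightarrow> y \<in> {0..1} \<Longrightarrow> y \<in> B i \<Longrightarrow> c i - e \<le> g y"
    and pos: "\<And>i. i \<in> I \<Longrightarrow> 0 < prob_in (B i) n"
    and near: "\<And>i. i \<in> I \<Longrightarrow> \<bar>ln (prob_in (B i) n) / real n - L i\<bar> < e"
    and card: "ln (real (card I)) / real n < e"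
  shows "\<bar>ln (exp_moment g n) / real n - Max ((\<lambda>i. c i + L i) ` I)\<bar> \<le> 3 * e"
proof -
  define V where "V = Max ((\<lambda>i. c i + L i) ` I)"
  have "V \<in> (\<lambda>i. c i + L i) ` I" unfolding V_def using assms(2,3) by (intro Max_in) auto
  then obtain i0 where i0: "i0 \<in> I" "V = c i0 + L i0" by blast
  have V_ge: "c i + L i \<le> V" if "i \<in> I" for i unfolding V_def using that assms(2) by (intro Max_ge) auto
  have "c i0 - e + ln (prob_in (B i0) n) / real n \<le> ln (exp_moment g n) / real n"
    using below[OF i0(1)] by (intro ln_exp_moment_ge[OF \<open>0 < n\<close> pos[OF i0(1)]])
  then have lower: "V - 2 * e \<le> ln (exp_moment g n) / real n"
    using near[OF i0(1)] i0(2) by linarith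
  have "ln (exp_moment g n) / real n \<le> V + 2 * e + ln (real (card I)) / real n"
  proof (rule ln_exp_moment_le[OF \<open>0 < n\<close> \<open>finite I\<close> cover pos])
    fix i assume "i \<in> I"
    then have "\<bar>ln (prob_in (B i) n) / real n - L i\<bar> < e" "c i + L i \<le> V"
      using near V_ge by auto
    then show "c i + e + ln (prob_in (B i) n) / real n \<le> V + 2 * e" by linarith
  qed
  then show ?thesis unfolding V_def[symmetric] using lower card by linarith
qed

lemma ln_exp_moment_near_grid:
  assumes "0 < N" "N \<le> n" "1 / real N < d"
    and d: "\<And>x y. x \<in> {0..1} \<Longrightarrow> y \<in> {0..1} \<Longrightarrow> \<bar>y - x\<bar> < d \<Longrightarrow> \<bar>g y - g x\<bar> < e"
    and near: "\<And>i. i \<le> N \<Longrightarrow>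
      \<bar>ln (prob_in {real i / real N - d<..<real i / real N + d} n) / real n - L i\<bar> < e"
    and card: "ln (real (card {..N})) / real n < e"
  shows "\<bar>ln (exp_moment g n) / real n - Max ((\<lambda>i. g (real i / real N) + L i) ` {..N})\<bar> \<le> 3 * e"
proof (rule ln_exp_moment_near_Max[OF _ finite_atMost _ _ _ _ _ card])
  have xp: "real i / real N \<in> {0..1}" if "i \<in> {..N}" for i
    using that \<open>0 < N\<close> by (simp add: divide_le_eq_1)
  have "0 < n" "1 / real n < d"
    using assms(1-3) frac_le[of 1 1 "real N" "real n"] by auto
  then show "0 < prob_in {real i / real N - d<..<real i / real N + d} n" if "i \<in> {..N}" for i
    using prob_in_pos_interval[OF xp[OF that]] by simp
  show "0 < n" by fact
  fix y :: real assume y: "y \<in> {0..1}"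
  then obtain j where "j \<le> N" "\<bar>y - real j / real N\<bar> < d"
    using grid_point_near[of y N d] assms(1,3) by auto
  then show "\<exists>j\<in>{..N}. y \<in> {real j / real N - d<..<real j / real N + d}
      \<and> g y \<le> g (real j / real N) + e"
    using d[OF xp y, of j] by (intro bexI[of _ j]) auto
next
  fix i y assume "i \<in> {..N}" "y \<in> {0..1}" "y \<in> {real i / real N - d<..<real i / real N + d}"
  then have "\<bar>g y - g (real i / real N)\<bar> < e" by (intro d) (auto simp: divide_le_eq_1 \<open>0 < N\<close>)
  then show "g (real i / real N) - e \<le> g y" by linarith
qed (use near in auto)

lemma ln_exp_moment_eventually_near:
  assumes g: "continuous_on {0..1} g" and "0 < e"
  shows "\<exists>V. \<forall>\<^sub>F n in sequentially. \<bar>ln (exp_moment g n) / real n - V\<bar> \<le> 3 * e"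
proof -
  obtain d N where "0 < d" "0 < N" "1 / real N < d"
    and d: "\<And>x y. x \<in> {0..1} \<Longrightarrow> y \<in> {0..1} \<Longrightarrow> \<bar>y - x\<bar> < d \<Longrightarrow> \<bar>g y - g x\<bar> < e"
    using uniform_continuity_grid[OF g \<open>0 < e\<close>] by blast
  define B where "B i = {real i / real N - d<..<real i / real N + d}" for i
  define L where "L i = lim (\<lambda>n. ln (prob_in (B i) n) / real n)" for i
  have "(\<lambda>n. ln (prob_in (B i) n) / real n) \<longlonglongrightarrow> L i" if "i \<in> {..N}" for i
    using convergent_ln_prob_in_interval[of "real i / real N" d] that \<open>0 < N\<close> \<open>0 < d\<close>
    unfolding L_def B_def by (simp add: convergent_LIMSEQ_iff divide_le_eq_1)
  then have "\<forall>\<^sub>F n in sequentially. (\<forall>i\<in>{..N}. \<bar>ln (prob_in (B i) n) / real n - L i\<bar> < e)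
      \<and> ln (real (card {..N})) / real n < e \<and> N \<le> n"
    using \<open>0 < e\<close> lim_const_over_n[of "ln (real (card {..N}))"]
    by (intro eventually_conj eventually_ball_finite ballI order_tendstoD)
      (auto simp: tendsto_iff dist_real_def eventually_ge_at_top)
  then have "\<forall>\<^sub>F n in sequentially.
      \<bar>ln (exp_moment g n) / real n - Max ((\<lambda>i. g (real i / real N) + L i) ` {..N})\<bar> \<le> 3 * e"
    by (rule eventually_mono)
      (use \<open>0 < N\<close> \<open>1 / real N < d\<close> d in \<open>auto intro!: ln_exp_moment_near_grid simp: B_def\<close>)
  then show ?thesis by blast
qed

lemma convergent_ln_exp_moment:
  assumes "continuous_on {0..1} g"
  shows "convergent (\<lambda>n. ln (exp_moment g n) / real n)"
proof (rule convergent_if_eventually_near)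
  fix e :: real assume "0 < e"
  then show "\<exists>V. \<forall>\<^sub>F n in sequentially. \<bar>ln (exp_moment g n) / real n - V\<bar> \<le> e"
    using ln_exp_moment_eventually_near[OF assms, of "e / 3"] by simp
qed

section \<open>The rate function\<close>

definition limit_log_moment :: "(real \<Rightarrow> real) \<Rightarrow> real" where
  "limit_log_moment g = lim (\<lambda>n. ln (exp_moment g n) / real n)"

definition rate :: "real \<Rightarrow> ereal" where
  "rate x = (SUP g\<in>{g. continuous_on {0..1} g}. ereal (g x - limit_log_moment g))"

lemma LIMSEQ_limit_log_moment:
  "continuous_on {0..1} g \<Longrightarrow> (\<lambda>n. ln (exp_moment g n) / real n) \<longlonglongrightarrow> limit_log_moment g"
  unfolding limit_log_moment_def using convergent_ln_exp_moment convergent_LIMSEQ_iff by blast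

lemma limit_log_moment_zero: "limit_log_moment (\<lambda>_. 0) = 0"
  by (simp add: limit_log_moment_def exp_moment_zero)

lemma rate_ge: "continuous_on {0..1} g \<Longrightarrow> ereal (g x - limit_log_moment g) \<le> rate x"
  unfolding rate_def by (rule SUP_upper) simp

lemma rate_nonneg: "0 \<le> rate x"
  using rate_ge[of "\<lambda>_. 0" x] by (simp add: limit_log_moment_zero zero_ereal_def)

lemma rate_sublevel_eq:
  "{x \<in> {0..1}. rate x \<le> ereal c}
    = {0..1} \<inter> (\<Inter>g\<in>{g. continuous_on {0..1} g}. {0..1} \<inter> g -` {..c + limit_log_moment g})"
  by (auto simp: rate_def SUP_le_iff)

lemma good_rate_function_rate: "good_rate_function rate"
proof -
  have closed: "closed {x \<in> {0..1}. rate x \<le> ereal c}" for c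
    unfolding rate_sublevel_eq by (intro closed_Int closed_INT ballI continuous_closed_preimage) auto
  then have "closedin (top_of_set {0..1}) {x \<in> {0..1}. rate x \<le> ereal c}" for c
    by (auto intro: closed_subset)
  moreover have "compact {x \<in> {0..1}. rate x \<le> ereal c}" for c
    using closed[of c] by (auto intro: bounded_subset[OF bounded_closed_interval] simp: compact_eq_bounded_closed)
  ultimately show ?thesis
    unfolding good_rate_function_def rate_function_def using rate_nonneg by auto
qed

text \<open>Exponential Chebyshev bound with a g for which g x - limit_log_moment g exceeds mu.\<close>
lemma eventually_prob_in_ball_le:
  assumes "x \<in> {0..1}" "ereal \<mu> < rate x"
  shows "\<exists>\<rho>>0. \<forall>\<^sub>F n in sequentially. prob_in (ball x \<rho>) n \<le> exp (- (real n * \<mu>))"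
proof -
  obtain g where g: "continuous_on {0..1} g" and "\<mu> < g x - limit_log_moment g"
    using assms(2) unfolding rate_def less_SUP_iff by auto
  define \<eta> where "\<eta> = g x - limit_log_moment g - \<mu>"
  have "0 < \<eta>" using \<open>\<mu> < g x - limit_log_moment g\<close> by (simp add: \<eta>_def)
  obtain \<rho> where "0 < \<rho>" and \<rho>: "\<And>y. y \<in> {0..1} \<Longrightarrow> dist y x < \<rho> \<Longrightarrow> dist (g y) (g x) < \<eta> / 2"
    using g assms(1) \<open>0 < \<eta>\<close> unfolding continuous_on_iff by (metis half_gt_zero)
  have "\<forall>\<^sub>F n in sequentially. ln (exp_moment g n) / real n < limit_log_moment g + \<eta> / 2"
    using LIMSEQ_limit_log_moment[OF g] \<open>0 < \<eta>\<close> by (intro order_tendstoD) auto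
  then have "\<forall>\<^sub>F n in sequentially. prob_in (ball x \<rho>) n \<le> exp (- (real n * \<mu>))"
    using eventually_gt_at_top[of 0]
  proof eventually_elim
    case (elim n)
    show ?case
    proof (cases "prob_in (ball x \<rho>) n = 0")
      case False
      then have pos: "0 < prob_in (ball x \<rho>) n" using prob_in_nonneg[of "ball x \<rho>" n] by simp
      have "g x - \<eta> / 2 + ln (prob_in (ball x \<rho>) n) / real n \<le> ln (exp_moment g n) / real n"
      proof (rule ln_exp_moment_ge[OF elim(2) pos])
        fix y assume "y \<in> {0..1}" "y \<in> ball x \<rho>"
        then have "dist (g y) (g x) < \<eta> / 2" by (intro \<rho>) (auto simp: dist_commute)
        then have "\<bar>g y - g x\<bar> < \<eta> / 2" by (simp add: dist_real_def)
        then show "g x - \<eta> / 2 \<le> g y" by linarith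
      qed
      moreover have "\<eta> = g x - limit_log_moment g - \<mu>" by (simp add: \<eta>_def)
      ultimately have "ln (prob_in (ball x \<rho>) n) / real n \<le> - \<mu>"
        using elim(1) by linarith
      then have "ln (prob_in (ball x \<rho>) n) \<le> - (real n * \<mu>)"
        using elim(2) by (simp add: divide_le_eq mult.commute)
      then show ?thesis using pos by (metis exp_le_cancel_iff exp_ln)
    qed simp
  qed
  then show ?thesis using \<open>0 < \<rho>\<close> by blast
qed

lemma eventually_prob_in_compact_le:
  assumes "compact F" "F \<subseteq> {0..1}" and less: "\<And>x. x \<in> F \<Longrightarrow> ereal \<mu> < rate x"
  shows "\<exists>C>0. \<forall>\<^sub>F n in sequentially. prob_in F n \<le> C * exp (- (real n * \<mu>))"
proof -
  have "\<forall>x\<in>F. \<exists>\<rho>>0. \<forall>\<^sub>F n in sequentially. prob_in (ball x \<rho>) n \<le> exp (- (real n * \<mu>))"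
    using eventually_prob_in_ball_le less assms(2) by blast
  then obtain \<rho> where \<rho>: "\<And>x. x \<in> F \<Longrightarrow> 0 < \<rho> x"
    "\<And>x. x \<in> F \<Longrightarrow> \<forall>\<^sub>F n in sequentially. prob_in (ball x (\<rho> x)) n \<le> exp (- (real n * \<mu>))"
    by metis
  obtain X where X: "X \<subseteq> F" "finite X" "F \<subseteq> (\<Union>x\<in>X. ball x (\<rho> x))"
    using compactE_image[OF \<open>compact F\<close>, of F "\<lambda>x. ball x (\<rho> x)"] \<rho>(1) by force
  have "\<forall>\<^sub>F n in sequentially. \<forall>x\<in>X. prob_in (ball x (\<rho> x)) n \<le> exp (- (real n * \<mu>))"
    using X \<rho>(2) by (intro eventually_ball_finite) auto
  then have "\<forall>\<^sub>F n in sequentially. prob_in F n \<le> (real (card X) + 1) * exp (- (real n * \<mu>))"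
  proof (rule eventually_mono)
    fix n assume balls: "\<forall>x\<in>X. prob_in (ball x (\<rho> x)) n \<le> exp (- (real n * \<mu>))"
    have "prob_in F n \<le> (\<Sum>x\<in>X. prob_in (ball x (\<rho> x)) n)"
      by (rule prob_in_le_sum[OF X(2)]) (use X(3) in blast)
    also have "\<dots> \<le> real (card X) * exp (- (real n * \<mu>))"
      using balls by (intro sum_bounded_above) auto
    also have "\<dots> \<le> (real (card X) + 1) * exp (- (real n * \<mu>))"
      by (intro mult_right_mono) auto
    finally show "prob_in F n \<le> (real (card X) + 1) * exp (- (real n * \<mu>))" .
  qed
  then show ?thesis by (intro exI[of _ "real (card X) + 1"]) auto
qed

lemma limsup_prob_in_closed_le:
  assumes "closedin (top_of_set {0..1}) F"
  shows "limsup (\<lambda>n. ereal (1 / real n) * elog (prob_in F n)) \<le> - (INF x\<in>F. rate x)"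
proof (rule le_uminus_if_forall_real_less)
  have "F \<subseteq> {0..1}" "closed F"
    using closedin_imp_subset[OF assms] closedin_closed_trans[OF assms closed_atLeastAtMost]
    by auto
  then have "compact F"
    by (auto intro: bounded_subset[OF bounded_closed_interval] simp: compact_eq_bounded_closed)
  fix \<mu> assume "ereal \<mu> < (INF x\<in>F. rate x)"
  then have "ereal \<mu> < rate x" if "x \<in> F" for x
    using INF_lower[OF that, of rate] by (rule less_le_trans)
  then obtain C where "0 < C" "\<forall>\<^sub>F n in sequentially. prob_in F n \<le> C * exp (- (real n * \<mu>))"
    using eventually_prob_in_compact_le[OF \<open>compact F\<close> \<open>F \<subseteq> {0..1}\<close>] by blast
  then show "limsup (\<lambda>n. ereal (1 / real n) * elog (prob_in F n)) \<le> - ereal \<mu>"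
    by (rule limsup_scaled_elog_le)
qed

lemma eventually_prob_in_open_pos:
  assumes "openin (top_of_set {0..1}) G" "x \<in> G"
  shows "\<forall>\<^sub>F n in sequentially. 0 < prob_in G n"
proof -
  obtain \<rho> where "0 < \<rho>" and near: "\<And>y. y \<in> {0..1} \<Longrightarrow> dist y x < \<rho> \<Longrightarrow> y \<in> G"
    using assms unfolding openin_euclidean_subtopology_iff by metis
  have "x \<in> {0..1}" using openin_imp_subset[OF assms(1)] assms(2) by blast
  have "\<forall>\<^sub>F n in sequentially. 1 / real n < \<rho>"
    using lim_const_over_n \<open>0 < \<rho>\<close> by (rule order_tendstoD)
  with eventually_gt_at_top[of 0] have "\<forall>\<^sub>F n in sequentially. 0 < n \<and> 1 / real n < \<rho>"
    by (rule eventually_conj)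
  then show ?thesis
  proof (rule eventually_mono, elim conjE)
    fix n :: nat assume "0 < n" "1 / real n < \<rho>"
    then have "0 < prob_in {x - \<rho><..<x + \<rho>} n" by (intro prob_in_pos_interval \<open>x \<in> {0..1}\<close>)
    also have "\<dots> \<le> prob_in G n"
      by (rule prob_in_mono) (auto intro!: near simp: dist_real_def abs_less_iff)
    finally show "0 < prob_in G n" .
  qed
qed

lemma exp_moment_tent_le:
  assumes "0 < \<rho>" "0 \<le> m" and near: "\<And>y. y \<in> {0..1} \<Longrightarrow> \<bar>y - x\<bar> < \<rho> \<Longrightarrow> y \<in> G"
  shows "exp_moment (tent m x \<rho>) n \<le> prob_in G n + exp (- (real n * m))"
proof -
  let ?B = "\<lambda>i::nat. if i = 0 then G else UNIV" and ?c = "\<lambda>i::nat. if i = 0 then 0 else - m"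
  have "exp_moment (tent m x \<rho>) n \<le> (\<Sum>i\<in>{0, 1}. exp (real n * ?c i) * prob_in (?B i) n)"
  proof (rule exp_moment_le_sum)
    fix y :: real assume y: "y \<in> {0..1}"
    show "\<exists>i\<in>{0, 1}. y \<in> ?B i \<and> tent m x \<rho> y \<le> ?c i"
    proof (cases "\<bar>y - x\<bar> < \<rho>")
      case True
      then show ?thesis
        using near[OF y True] tent_nonpos[OF assms(1,2)] by (intro bexI[of _ 0]) auto
    next
      case False
      then show ?thesis using \<open>0 < \<rho>\<close> by (intro bexI[of _ 1]) (auto simp: tent_def min_def)
    qed
  qed simp
  also have "\<dots> = prob_in G n + exp (- (real n * m)) * prob_in UNIV n" by simp
  also have "\<dots> \<le> prob_in G n + exp (- (real n * m))"
    using prob_in_le_1[of UNIV n] by (simp add: mult_left_le)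
  finally show ?thesis .
qed

lemma ln_exp_moment_tent_le:
  assumes "0 < n" "0 < prob_in G n" "0 < \<rho>" "0 \<le> m"
    and near: "\<And>y. y \<in> {0..1} \<Longrightarrow> \<bar>y - x\<bar> < \<rho> \<Longrightarrow> y \<in> G"
  shows "ln (exp_moment (tent m x \<rho>) n) / real n
    \<le> ln 2 / real n + max (ln (prob_in G n) / real n) (- m)"
proof -
  have "ln (exp_moment (tent m x \<rho>) n) \<le> ln (prob_in G n + exp (- (real n * m)))"
    using exp_moment_tent_le[OF assms(3,4) near] exp_moment_pos assms(2)
    by (subst ln_le_cancel_iff) (auto intro: add_pos_pos)
  then have "ln (exp_moment (tent m x \<rho>) n) / real n \<le> ln (prob_in G n + exp (- (real n * m))) / real n"
    by (rule divide_right_mono) simp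
  also have "\<dots> \<le> ln 2 / real n + max (ln (prob_in G n) / real n) (ln (exp (- (real n * m))) / real n)"
    using assms(1,2) by (intro ln_add_div_le_max) auto
  finally show ?thesis using assms(1) by simp
qed

text \<open>Test rate x against the tent of depth rate x + 1 at x: its limit_log_moment is at least
  - rate x, while outside G the tent contributes only exp (- n (rate x + 1)), so the exponential
  moment must come from G.\<close>
lemma eventually_ln_prob_in_open_gt:
  assumes G: "openin (top_of_set {0..1}) G" and "x \<in> G" and r: "rate x = ereal r" and "y < - r"
  shows "\<forall>\<^sub>F n in sequentially. 0 < prob_in G n \<and> y < ln (prob_in G n) / real n"
proof -
  obtain \<rho> where "0 < \<rho>" and near: "\<And>z. z \<in> {0..1} \<Longrightarrow> dist z x < \<rho> \<Longrightarrow> z \<in> G"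
    using G \<open>x \<in> G\<close> unfolding openin_euclidean_subtopology_iff by metis
  have "0 \<le> r" using rate_nonneg[of x] r by simp
  let ?g = "tent (r + 1) x \<rho>"
  have g: "continuous_on {0..1} ?g" using \<open>0 < \<rho>\<close> by (rule continuous_on_tent)
  have "- r \<le> limit_log_moment ?g" using rate_ge[OF g, of x] r by (simp add: tent_def)
  define \<epsilon> where "\<epsilon> = min (1 / 4) ((- r - y) / 3)"
  have "\<epsilon> \<le> (- r - y) / 3" unfolding \<epsilon>_def by (rule min.cobounded2)
  then have \<epsilon>: "0 < \<epsilon>" "\<epsilon> \<le> 1 / 4" "3 * \<epsilon> \<le> - r - y"
    using \<open>y < - r\<close> by (simp_all add: \<epsilon>_def)
  have "\<forall>\<^sub>F n in sequentially. limit_log_moment ?g - \<epsilon> < ln (exp_moment ?g n) / real n"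
    using LIMSEQ_limit_log_moment[OF g] \<epsilon>(1) by (intro order_tendstoD) auto
  moreover have "\<forall>\<^sub>F n in sequentially. ln 2 / real n < \<epsilon>"
    using lim_const_over_n \<epsilon>(1) by (rule order_tendstoD)
  ultimately have "\<forall>\<^sub>F n in sequentially. (limit_log_moment ?g - \<epsilon> < ln (exp_moment ?g n) / real n
      \<and> ln 2 / real n < \<epsilon>) \<and> 0 < n \<and> 0 < prob_in G n"
    using eventually_gt_at_top[of 0] eventually_prob_in_open_pos[OF G \<open>x \<in> G\<close>]
    by (intro eventually_conj)
  then show ?thesis
  proof (rule eventually_mono, elim conjE, intro conjI)
    fix n :: nat
    assume Z: "limit_log_moment ?g - \<epsilon> < ln (exp_moment ?g n) / real n"
      and two: "ln 2 / real n < \<epsilon>" and "0 < n" and P: "0 < prob_in G n"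
    then show "0 < prob_in G n" by simp
    have "ln (exp_moment ?g n) / real n \<le> ln 2 / real n + max (ln (prob_in G n) / real n) (- (r + 1))"
      using \<open>0 < \<rho>\<close> \<open>0 \<le> r\<close> near
      by (intro ln_exp_moment_tent_le[OF \<open>0 < n\<close> P]) (auto simp: dist_real_def)
    then have "- r - 2 * \<epsilon> < max (ln (prob_in G n) / real n) (- (r + 1))"
      using Z two \<open>- r \<le> limit_log_moment ?g\<close> by linarith
    then show "y < ln (prob_in G n) / real n" using \<epsilon> by (auto simp: max_def split: if_splits)
  qed
qed

lemma liminf_prob_in_open_ge:
  assumes "openin (top_of_set {0..1}) G"
  shows "- (INF x\<in>G. rate x) \<le> liminf (\<lambda>n. ereal (1 / real n) * elog (prob_in G n))"
  unfolding ereal_SUP_uminus_eq[symmetric]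
proof (rule SUP_least)
  fix x assume "x \<in> G"
  show "- rate x \<le> liminf (\<lambda>n. ereal (1 / real n) * elog (prob_in G n))"
  proof (cases "rate x")
    case (real r)
    then show ?thesis
      using liminf_scaled_elog_ge[of "- r"] eventually_ln_prob_in_open_gt[OF assms \<open>x \<in> G\<close> real]
      by simp
  qed (use rate_nonneg[of x] in auto)
qed

end

locale hawkes_process = hawkes_kernel a + prob_space M for a and M :: "'a measure" +
  fixes \<xi> :: "nat \<Rightarrow> 'a \<Rightarrow> nat"
  assumes measurable_\<xi>: "\<And>i. \<xi> i \<in> measurable M (count_space UNIV)"
    and \<xi>_binary: "\<And>i \<omega>. \<omega> \<in> space M \<Longrightarrow> \<xi> i \<omega> \<in> {0, 1}"
    and prob_arrival: "\<And>n x. n \<ge> 1 \<Longrightarrow> (\<forall>i. x i \<in> {0::nat, 1}) \<Longrightarrow>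
        measure M {\<omega> \<in> space M. \<xi> n \<omega> = 1 \<and> (\<forall>i\<in>{1..n-1}. \<xi> i \<omega> = x i)}
        = (a 0 + (\<Sum>i=1..n-1. a (n - i) * real (x i)))
          * measure M {\<omega> \<in> space M. \<forall>i\<in>{1..n-1}. \<xi> i \<omega> = x i}"
    and prob_no_arrival: "\<And>n x. n \<ge> 1 \<Longrightarrow> (\<forall>i. x i \<in> {0::nat, 1}) \<Longrightarrow>
        measure M {\<omega> \<in> space M. \<xi> n \<omega> = 0 \<and> (\<forall>i\<in>{1..n-1}. \<xi> i \<omega> = x i)}
        = (1 - (a 0 + (\<Sum>i=1..n-1. a (n - i) * real (x i))))
          * measure M {\<omega> \<in> space M. \<forall>i\<in>{1..n-1}. \<xi> i \<omega> = x i}"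
begin

definition sample_path :: "nat \<Rightarrow> 'a \<Rightarrow> nat \<Rightarrow> nat" where
  "sample_path n \<omega> = (\<lambda>i. if i \<in> {1..n} then \<xi> i \<omega> else 0)"

definition cylinder :: "nat \<Rightarrow> (nat \<Rightarrow> nat) \<Rightarrow> 'a set" where
  "cylinder n x = {\<omega> \<in> space M. \<forall>i\<in>{1..n}. \<xi> i \<omega> = x i}"

lemma cylinder_in_sets: "cylinder n x \<in> sets M"
  unfolding cylinder_def
proof (rule sets.sets_Collect_finite_All)
  fix i
  have "{\<omega> \<in> space M. \<xi> i \<omega> = x i} = \<xi> i -` {x i} \<inter> space M" by auto
  also have "\<dots> \<in> sets M" by (rule measurable_sets[OF measurable_\<xi>]) simp
  finally show "{\<omega> \<in> space M. \<xi> i \<omega> = x i} \<in> sets M" .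
qed simp

lemma measure_cylinder: "(\<And>i. x i \<in> {0, 1}) \<Longrightarrow> measure M (cylinder n x) = path_prob n x"
proof (induction n)
  case 0
  have "cylinder 0 x = space M" by (simp add: cylinder_def)
  then show ?case by (simp add: path_prob_def prob_space)
next
  case (Suc n)
  have "cylinder (Suc n) x
      = {\<omega> \<in> space M. \<xi> (Suc n) \<omega> = x (Suc n) \<and> (\<forall>i\<in>{1..Suc n - 1}. \<xi> i \<omega> = x i)}"
    unfolding cylinder_def by (auto simp: le_Suc_eq)
  moreover have "{\<omega> \<in> space M. \<forall>i\<in>{1..Suc n - 1}. \<xi> i \<omega> = x i} = cylinder n x"
    by (simp add: cylinder_def)
  moreover have "x (Suc n) = 1 \<or> x (Suc n) = 0" using Suc.prems[of "Suc n"] by auto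
  ultimately show ?case
    using prob_arrival[of "Suc n" x] prob_no_arrival[of "Suc n" x] Suc
    by (auto simp: path_prob_Suc step_prob_def intensity_def)
qed

lemma sample_path_in_paths: "\<omega> \<in> space M \<Longrightarrow> sample_path n \<omega> \<in> paths n"
  using \<xi>_binary unfolding paths_def sample_path_def by auto

lemma sample_path_eq_iff:
  assumes "\<omega> \<in> space M" "x \<in> paths n"
  shows "sample_path n \<omega> = x \<longleftrightarrow> \<omega> \<in> cylinder n x"
  using assms paths_outside[OF assms(2)]
  by (auto simp: sample_path_def cylinder_def fun_eq_iff)

lemma integral_sample_path:
  "integral\<^sup>L M (\<lambda>\<omega>. f (sample_path n \<omega>)) = (\<Sum>x\<in>paths n. f x * path_prob n x)"
proof -
  have "integral\<^sup>L M (\<lambda>\<omega>. f (sample_path n \<omega>))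
      = integral\<^sup>L M (\<lambda>\<omega>. \<Sum>x\<in>paths n. f x * indicator (cylinder n x) \<omega>)"
  proof (rule Bochner_Integration.integral_cong[OF refl])
    fix \<omega> assume \<omega>: "\<omega> \<in> space M"
    have "(\<Sum>x\<in>paths n. f x * indicator (cylinder n x) \<omega>)
        = (\<Sum>x\<in>paths n. if sample_path n \<omega> = x then f x else 0)"
      by (rule sum.cong) (use sample_path_eq_iff[OF \<omega>] in auto)
    also have "\<dots> = f (sample_path n \<omega>)"
      using sample_path_in_paths[OF \<omega>] finite_paths by (simp add: sum.delta)
    finally show "f (sample_path n \<omega>) = (\<Sum>x\<in>paths n. f x * indicator (cylinder n x) \<omega>)" by simp
  qed
  also have "\<dots> = (\<Sum>x\<in>paths n. f x * measure M (cylinder n x))"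
    using cylinder_in_sets[THEN sets.sets_into_space]
    by (subst Bochner_Integration.integral_sum)
      (auto intro!: integrable_mult_right integrable_real_indicator cylinder_in_sets
        simp: less_top[symmetric] Int_absorb2)
  also have "\<dots> = (\<Sum>x\<in>paths n. f x * path_prob n x)"
  proof (intro sum.cong refl)
    fix x assume "x \<in> paths n"
    then show "f x * measure M (cylinder n x) = f x * path_prob n x"
      by (simp add: measure_cylinder[OF paths_binary[OF \<open>x \<in> paths n\<close>]])
  qed
  finally show ?thesis .
qed

lemma measure_sample_path:
  "measure M {\<omega> \<in> space M. Q (sample_path n \<omega>)} = (\<Sum>x\<in>paths n. if Q x then path_prob n x else 0)"
proof -
  have "measure M {\<omega> \<in> space M. Q (sample_path n \<omega>)}
      = integral\<^sup>L M (indicator {\<omega> \<in> space M. Q (sample_path n \<omega>)})"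
    by (simp add: Int_absorb2)
  also have "\<dots> = integral\<^sup>L M (\<lambda>\<omega>. (\<lambda>x. if Q x then 1 else 0) (sample_path n \<omega>))"
    by (rule Bochner_Integration.integral_cong) (auto simp: indicator_def)
  also have "\<dots> = (\<Sum>x\<in>paths n. if Q x then path_prob n x else 0)"
    by (subst integral_sample_path) (rule sum.cong; simp)
  finally show ?thesis .
qed

lemma arrivals_sample_path: "arrivals n (sample_path n \<omega>) = (\<Sum>i=1..n. \<xi> i \<omega>)"
  by (simp add: arrivals_def sample_path_def)

end

theorem theorem4p1:
  fixes M :: "'a measure" and a :: "nat \<Rightarrow> real" and \<xi> :: "nat \<Rightarrow> 'a \<Rightarrow> nat"
    and H :: "nat \<Rightarrow> 'a \<Rightarrow> nat"
    and \<Gamma> :: "(real \<Rightarrow> real) \<Rightarrow> real" and R :: "real \<Rightarrow> ereal"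
  assumes "prob_space M"
    and a_pos: "\<And>i. a i > 0"
    and "summable a" and "suminf a < 1"
    and "summable (\<lambda>i. real i * a i)"
    and meas: "\<And>i. \<xi> i \<in> measurable M (count_space UNIV)"
    and bin: "\<And>i \<omega>. \<omega> \<in> space M \<Longrightarrow> \<xi> i \<omega> \<in> {0, 1}"
    and cond1: "\<And>n x. n \<ge> 1 \<Longrightarrow> (\<forall>i. x i \<in> {0::nat, 1}) \<Longrightarrow>
        measure M {\<omega> \<in> space M. \<xi> n \<omega> = 1 \<and> (\<forall>i\<in>{1..n-1}. \<xi> i \<omega> = x i)}
        = (a 0 + (\<Sum>i=1..n-1. a (n - i) * real (x i)))
          * measure M {\<omega> \<in> space M. \<forall>i\<in>{1..n-1}. \<xi> i \<omega> = x i}"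
    and cond0: "\<And>n x. n \<ge> 1 \<Longrightarrow> (\<forall>i. x i \<in> {0::nat, 1}) \<Longrightarrow>
        measure M {\<omega> \<in> space M. \<xi> n \<omega> = 0 \<and> (\<forall>i\<in>{1..n-1}. \<xi> i \<omega> = x i)}
        = (1 - (a 0 + (\<Sum>i=1..n-1. a (n - i) * real (x i))))
          * measure M {\<omega> \<in> space M. \<forall>i\<in>{1..n-1}. \<xi> i \<omega> = x i}"
    and H_def: "\<And>n \<omega>. H n \<omega> = (\<Sum>i=1..n. \<xi> i \<omega>)"
    and \<Gamma>_def: "\<And>g. \<Gamma> g = lim (\<lambda>n. ln (integral\<^sup>L M (\<lambda>\<omega>. exp (real n * g (real (H n \<omega>) / real n)))) / real n)"
    and R_def: "\<And>x. R x = (SUP g\<in>{g. continuous_on {0..1} g}. ereal (g x - \<Gamma> g))"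
  shows "(\<forall>g. continuous_on {0..1} g \<longrightarrow>
            (\<lambda>n. ln (integral\<^sup>L M (\<lambda>\<omega>. exp (real n * g (real (H n \<omega>) / real n)))) / real n)
              \<longlonglongrightarrow> \<Gamma> g)
       \<and> good_rate_function R
       \<and> (\<forall>F. closedin (top_of_set {0..1}) F \<longrightarrow>
            limsup (\<lambda>n. ereal (1 / real n) * elog (measure M {\<omega> \<in> space M. real (H n \<omega>) / real n \<in> F}))
              \<le> - (INF x\<in>F. R x))
       \<and> (\<forall>G. openin (top_of_set {0..1}) G \<longrightarrow>
            liminf (\<lambda>n. ereal (1 / real n) * elog (measure M {\<omega> \<in> space M. real (H n \<omega>) / real n \<in> G}))
              \<ge> - (INF x\<in>G. R x))"
proof -
  interpret hawkes_process a M \<xi>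
    unfolding hawkes_process_def hawkes_process_axioms_def hawkes_kernel_def using assms by blast
  have H_rate: "real (H n \<omega>) / real n = empirical_rate n (sample_path n \<omega>)" for n \<omega>
    by (simp add: H_def empirical_rate_def arrivals_sample_path)
  have moment: "integral\<^sup>L M (\<lambda>\<omega>. exp (real n * g (real (H n \<omega>) / real n))) = exp_moment g n" for g n
    unfolding H_rate exp_moment_def by (rule integral_sample_path)
  have prob: "measure M {\<omega> \<in> space M. real (H n \<omega>) / real n \<in> S} = prob_in S n" for S n
    unfolding H_rate prob_in_def by (rule measure_sample_path)
  have "\<Gamma> = limit_log_moment" by (simp add: fun_eq_iff \<Gamma>_def moment limit_log_moment_def)
  moreover have "R = rate" by (simp add: fun_eq_iff R_def rate_def \<open>\<Gamma> = limit_log_moment\<close>)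
  ultimately show ?thesis
    unfolding moment prob
    using LIMSEQ_limit_log_moment good_rate_function_rate limsup_prob_in_closed_le liminf_prob_in_open_ge
    by blast
qed

end
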